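(* Let $P$ be a finite poset and $h$ any height function on $P$. Then the coefficients of $\mathsf{Z}_{P,h}(x)$ have no pole at $q=1$, and setting $q=1$ in them gives the classical Zeta polynomial $Z_P(x)$ of $P$, i.e. the unique polynomial with $Z_P(n)=\#\{(e_1,\dots,e_{n-1})\in P^{n-1}: e_1\le\cdots\le e_{n-1}\}$ for all integers $n\ge2$.
   Context: $q$ is an indeterminate; $[n]_q=(q^n-1)/(q-1)$. A height function is $h:P\to\mathbb{N}$ with $h(x)<h(y)$ whenever $y$ covers $x$. For a tuple $a$ of $k$ distinct nonnegative integers, $\mathsf{E}_a\in\mathbb{Q}(q)[x]$ is the unique polynomial with $\mathsf{E}_a([n]_q)=\sum_{m\in\mathbb{N}^k,\sum m_i=n}q^{\sum a_im_i}$ for $n\ge0$ (its specialization at $q=1$ is $\binom{x+k-1}{k-1}$). The $q$-Zeta polynomial is $\mathsf{Z}_{P,h}(x)=\sum_{k\ge1}\sum_{c_1<\cdots<c_k\text{ in }P}q^{\sum_i h(c_i)}\mathsf{E}_{(h(c_1),\dots,h(c_k))}((x-[k+1]_q)/q^{k+1})\in\mathbb{Q}(q)[x]$; it is the unique polynomial with $\mathsf{Z}_{P,h}([n]_q)=\sum_{e_1\le\cdots\le e_{n-1}}q^{\sum_j h(e_j)}$ for all $n\ge2$. *)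

theory Defs
  imports "HOL-Computational_Algebra.Polynomial" "HOL-Computational_Algebra.Fraction_Field"
begin

type_synonym ratfun = "rat poly fract"

definition qvar :: ratfun where
  "qvar = Fract [:0, 1:] 1"

definition qint :: "nat \<Rightarrow> ratfun" where
  "qint n = (qvar ^ n - 1) / (qvar - 1)"

definition Esum :: "nat list \<Rightarrow> nat \<Rightarrow> ratfun" where
  "Esum a n = (\<Sum>m \<in> {m :: nat list. length m = length a \<and> sum_list m = n}.
                  qvar ^ (\<Sum>i<length a. a ! i * m ! i))"

definition Epoly :: "nat list \<Rightarrow> ratfun poly" where
  "Epoly a = (THE p. \<forall>n. poly p (qint n) = Esum a n)"

text \<open>Covering relation and height functions on a poset P (a subset of an ordered type,
  with the induced order).\<close>
definition covers :: "'a::order set \<Rightarrow> 'a \<Rightarrow> 'a \<Rightarrow> bool" where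
  "covers P x y \<longleftrightarrow> x \<in> P \<and> y \<in> P \<and> x < y \<and> \<not> (\<exists>z\<in>P. x < z \<and> z < y)"

definition height_function :: "'a::order set \<Rightarrow> ('a \<Rightarrow> nat) \<Rightarrow> bool" where
  "height_function P h \<longleftrightarrow> (\<forall>x y. covers P x y \<longrightarrow> h x < h y)"

definition strict_chains :: "'a::order set \<Rightarrow> 'a list set" where
  "strict_chains P = {cs. cs \<noteq> [] \<and> set cs \<subseteq> P \<and> sorted_wrt (<) cs}"

definition qZeta :: "'a::order set \<Rightarrow> ('a \<Rightarrow> nat) \<Rightarrow> ratfun poly" where
  "qZeta P h = (\<Sum>cs \<in> strict_chains P.
      smult (qvar ^ sum_list (map h cs))
        (pcompose (Epoly (map h cs))
           [: - qint (length cs + 1) / qvar ^ (length cs + 1), 1 / qvar ^ (length cs + 1) :]))"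

definition no_pole_at_1 :: "ratfun \<Rightarrow> bool" where
  "no_pole_at_1 r \<longleftrightarrow> (\<exists>a b. poly b 1 \<noteq> 0 \<and> r = Fract a b)"

definition eval_at_1 :: "ratfun \<Rightarrow> rat" where
  "eval_at_1 r = (THE v. \<exists>a b. poly b 1 \<noteq> 0 \<and> r = Fract a b \<and> v = poly a 1 / poly b 1)"

definition multichains :: "'a::order set \<Rightarrow> nat \<Rightarrow> 'a list set" where
  "multichains P l = {es. length es = l \<and> set es \<subseteq> P \<and> sorted_wrt (\<le>) es}"

definition Zeta :: "'a::order set \<Rightarrow> rat poly" where
  "Zeta P = (THE p. \<forall>n::nat. n \<ge> 2 \<longrightarrow> poly p (of_nat n) = of_nat (card (multichains P (n - 1))))"

end

theory Submission
  imports Defs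
begin

(* Both sides are sums over the strict chains c_1 < ... < c_k of P.  A height function is strictly
   increasing along chains, so the exponent tuple a = (h c_1, ..., h c_k) has distinct entries.  For
   such a, the sums Esum a n satisfy the divided difference identity
     (q^b - q^c) Esum (b # c # a) n = Esum (b # a) (n + 1) - Esum (c # a) (n + 1),
   which produces E_a by induction on k; and E_a has no pole at q = 1 because it is the Lagrange
   interpolant of pole-free values at the nodes [0]_q, ..., [d]_q, which stay distinct at q = 1.
   Specialising q = 1 turns [n]_q into n and Esum a n into the number of weak compositions of n
   into k parts, so the chain term of the q-Zeta polynomial becomes the binomial polynomial
   (x - 2 choose k - 1).  Classically, each multichain of length n - 1 arises from exactly one strict
   chain of length k by repeating its elements, so Z_P(n) is the sum of the same binomials. *)

section \<open>Polynomials determined by their values\<close>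

lemma poly_eqI_infinite:
  fixes p q :: "'a::idom poly"
  assumes "infinite A" "\<And>x. x \<in> A \<Longrightarrow> poly p x = poly q x"
  shows "p = q"
proof (rule ccontr)
  assume "p \<noteq> q"
  then have "finite {x. poly (p - q) x = 0}"
    by (intro poly_roots_finite) simp
  moreover have "A \<subseteq> {x. poly (p - q) x = 0}"
    using assms(2) by auto
  ultimately show False
    using assms(1) finite_subset by blast
qed

lemma infinite_of_nat_atLeast: "infinite (of_nat ` {N..} :: 'a::semiring_char_0 set)"
proof
  assume "finite (of_nat ` {N..} :: 'a set)"
  then have "finite {N..}"
    by (rule finite_imageD) (simp add: inj_on_def)
  then show False
    using infinite_Ici by blast
qed

definition lagrange_basis :: "('b \<Rightarrow> 'a::field) \<Rightarrow> 'b set \<Rightarrow> 'b \<Rightarrow> 'a poly" where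
  "lagrange_basis x I i = (\<Prod>j\<in>I - {i}. smult (inverse (x i - x j)) [:- x j, 1:])"

lemma degree_lagrange_basis:
  assumes "finite I"
  shows "degree (lagrange_basis x I i) \<le> card (I - {i})"
proof -
  define f where "f j = smult (inverse (x i - x j)) [:- x j, 1:]" for j
  have "degree (lagrange_basis x I i) \<le> (\<Sum>j\<in>I - {i}. degree (f j))"
    unfolding lagrange_basis_def f_def[symmetric] using degree_prod_sum_le[of "I - {i}" f] assms
    by (simp add: o_def)
  also have "\<dots> \<le> (\<Sum>j\<in>I - {i}. 1)"
    unfolding f_def by (intro sum_mono order.trans[OF degree_smult_le]) simp
  finally show ?thesis
    by simp
qed

lemma poly_lagrange_basis:
  assumes "finite I" "inj_on x I" "i \<in> I" "k \<in> I"
  shows "poly (lagrange_basis x I i) (x k) = (if k = i then 1 else 0)"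
proof (cases "k = i")
  case True
  have "poly (smult (inverse (x i - x j)) [:- x j, 1:]) (x i) = 1" if "j \<in> I - {i}" for j
  proof -
    have "x i - x j \<noteq> 0"
      using assms(2,3) that by (auto dest: inj_onD)
    moreover have "poly (smult (inverse (x i - x j)) [:- x j, 1:]) (x i)
        = inverse (x i - x j) * (x i - x j)"
      by (simp add: algebra_simps)
    ultimately show ?thesis
      by simp
  qed
  then show ?thesis
    using True by (simp add: lagrange_basis_def poly_prod del: poly_smult poly_pCons)
next
  case False
  then show ?thesis
    unfolding lagrange_basis_def poly_prod
    by (auto intro!: prod_zero bexI[of _ k] simp: assms(1,4))
qed

lemma lagrange_interpolation:
  fixes p :: "'a::field poly"
  assumes "finite I" "inj_on x I" "degree p < card I"
  shows "p = (\<Sum>i\<in>I. smult (poly p (x i)) (lagrange_basis x I i))"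
    (is "p = ?L")
proof (rule poly_eqI_degree)
  fix y
  assume "y \<in> x ` I"
  then obtain k where k: "k \<in> I" "y = x k"
    by blast
  have "poly ?L y = (\<Sum>i\<in>I. poly p (x i) * (if k = i then 1 else 0))"
    unfolding poly_sum k(2) using assms(1,2) k(1)
    by (intro sum.cong) (simp_all add: poly_lagrange_basis)
  also have "\<dots> = poly p y"
    using assms(1) k by (simp add: if_distrib cong: if_cong)
  finally show "poly p y = poly ?L y" ..
next
  show "degree p < card (x ` I)"
    using assms by (simp add: card_image)
  have "degree ?L < card I"
  proof (intro degree_sum_less le_less_trans[OF degree_smult_le])
    fix i
    assume "i \<in> I"
    then show "degree (lagrange_basis x I i) < card I"
      using degree_lagrange_basis[OF assms(1), of x i] assms(1) card_Diff1_less by fastforce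
  qed (use assms in simp)
  then show "degree ?L < card (x ` I)"
    using assms by (simp add: card_image)
qed

definition gbinomial_poly :: "nat \<Rightarrow> 'a::field_char_0 poly" where
  "gbinomial_poly k = smult (inverse (fact k)) (\<Prod>i<k. [:- of_nat i, 1:])"

lemma poly_gbinomial_poly: "poly (gbinomial_poly k) x = x gchoose k"
  by (simp add: gbinomial_poly_def gbinomial_prod_rev poly_prod atLeast0LessThan divide_inverse
      mult.commute)

section \<open>Functions without a pole at q = 1\<close>

lemma eval_at_1_Fract:
  assumes "poly b 1 \<noteq> 0"
  shows "eval_at_1 (Fract a b) = poly a 1 / poly b 1"
  unfolding eval_at_1_def
proof (rule the_equality)
  show "\<exists>a' b'. poly b' 1 \<noteq> 0 \<and> Fract a b = Fract a' b' \<and> poly a 1 / poly b 1 = poly a' 1 / poly b' 1"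
    using assms by blast
next
  fix v
  assume "\<exists>a' b'. poly b' 1 \<noteq> 0 \<and> Fract a b = Fract a' b' \<and> v = poly a' 1 / poly b' 1"
  then obtain a' b' where b': "poly b' 1 \<noteq> 0" and eq: "Fract a b = Fract a' b'"
    and v: "v = poly a' 1 / poly b' 1" by blast
  have "b \<noteq> 0" "b' \<noteq> 0"
    using assms b' by auto
  with eq have "a * b' = a' * b"
    by (simp add: eq_fract)
  then have "poly a 1 * poly b' 1 = poly a' 1 * poly b 1"
    by (metis poly_mult)
  then have "poly a 1 / poly b 1 = poly a' 1 / poly b' 1"
    using assms b' by (simp add: divide_eq_eq eq_divide_eq)
  then show "v = poly a 1 / poly b 1"
    using v by simp
qed

lemma no_pole_at_1_Fract: "poly b 1 \<noteq> 0 \<Longrightarrow> no_pole_at_1 (Fract a b)"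
  unfolding no_pole_at_1_def by blast

lemma no_pole_at_1_E:
  assumes "no_pole_at_1 r"
  obtains a b where "poly b 1 \<noteq> 0" "r = Fract a b"
  using assms unfolding no_pole_at_1_def by blast

lemma
  shows no_pole_at_1_poly_const: "no_pole_at_1 (Fract p 1)"
    and eval_at_1_poly_const: "eval_at_1 (Fract p 1) = poly p 1"
  by (simp_all add: no_pole_at_1_Fract eval_at_1_Fract)

lemma
  shows no_pole_at_1_0: "no_pole_at_1 0" and eval_at_1_0: "eval_at_1 0 = 0"
    and no_pole_at_1_1: "no_pole_at_1 1"
  using no_pole_at_1_poly_const[of 0] eval_at_1_poly_const[of 0] no_pole_at_1_poly_const[of 1]
  by (simp_all add: Zero_fract_def One_fract_def)

lemma
  assumes "no_pole_at_1 r" "no_pole_at_1 s"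
  shows no_pole_at_1_add: "no_pole_at_1 (r + s)"
    and eval_at_1_add: "eval_at_1 (r + s) = eval_at_1 r + eval_at_1 s"
proof -
  obtain a b where ab: "poly b 1 \<noteq> 0" "r = Fract a b" using assms(1) by (rule no_pole_at_1_E)
  obtain c d where cd: "poly d 1 \<noteq> 0" "s = Fract c d" using assms(2) by (rule no_pole_at_1_E)
  have "b \<noteq> 0" "d \<noteq> 0"
    using ab cd by auto
  then have sum: "r + s = Fract (a * d + c * b) (b * d)"
    using ab cd by simp
  show "no_pole_at_1 (r + s)"
    unfolding sum using ab cd by (simp add: no_pole_at_1_Fract)
  show "eval_at_1 (r + s) = eval_at_1 r + eval_at_1 s"
    unfolding sum using ab cd by (simp add: eval_at_1_Fract field_simps)
qed

lemma
  assumes "no_pole_at_1 r" "no_pole_at_1 s"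
  shows no_pole_at_1_mult: "no_pole_at_1 (r * s)"
    and eval_at_1_mult: "eval_at_1 (r * s) = eval_at_1 r * eval_at_1 s"
proof -
  obtain a b where ab: "poly b 1 \<noteq> 0" "r = Fract a b" using assms(1) by (rule no_pole_at_1_E)
  obtain c d where cd: "poly d 1 \<noteq> 0" "s = Fract c d" using assms(2) by (rule no_pole_at_1_E)
  have prod: "r * s = Fract (a * c) (b * d)"
    using ab cd by simp
  show "no_pole_at_1 (r * s)"
    unfolding prod using ab cd by (simp add: no_pole_at_1_Fract)
  show "eval_at_1 (r * s) = eval_at_1 r * eval_at_1 s"
    unfolding prod ab(2) cd(2) using ab(1) cd(1) by (simp add: eval_at_1_Fract)
qed

lemma
  assumes "no_pole_at_1 r"
  shows no_pole_at_1_uminus: "no_pole_at_1 (- r)"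
    and eval_at_1_uminus: "eval_at_1 (- r) = - eval_at_1 r"
  using assms by (auto elim!: no_pole_at_1_E simp: no_pole_at_1_Fract eval_at_1_Fract)

lemma
  assumes "no_pole_at_1 r" "no_pole_at_1 s"
  shows no_pole_at_1_diff: "no_pole_at_1 (r - s)"
    and eval_at_1_diff: "eval_at_1 (r - s) = eval_at_1 r - eval_at_1 s"
  using no_pole_at_1_add[OF assms(1) no_pole_at_1_uminus[OF assms(2)]]
    eval_at_1_add[OF assms(1) no_pole_at_1_uminus[OF assms(2)]] eval_at_1_uminus[OF assms(2)]
  by simp_all

lemma no_pole_at_1_inverse:
  assumes "no_pole_at_1 r" "eval_at_1 r \<noteq> 0"
  shows "no_pole_at_1 (inverse r)"
proof -
  obtain a b where ab: "poly b 1 \<noteq> 0" "r = Fract a b" using assms(1) by (rule no_pole_at_1_E)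
  have "poly a 1 \<noteq> 0" using assms(2) ab by (simp add: eval_at_1_Fract)
  then show ?thesis
    using ab by (simp add: no_pole_at_1_Fract)
qed

lemma no_pole_at_1_divide:
  assumes "no_pole_at_1 r" "no_pole_at_1 s" "eval_at_1 s \<noteq> 0"
  shows "no_pole_at_1 (r / s)"
  using no_pole_at_1_mult[OF assms(1) no_pole_at_1_inverse[OF assms(2,3)]]
  by (simp add: divide_inverse)

lemma
  assumes "\<And>x. x \<in> A \<Longrightarrow> no_pole_at_1 (f x)"
  shows no_pole_at_1_sum: "no_pole_at_1 (sum f A)"
    and eval_at_1_sum: "eval_at_1 (sum f A) = (\<Sum>x\<in>A. eval_at_1 (f x))"
proof -
  have "no_pole_at_1 (sum f A) \<and> eval_at_1 (sum f A) = (\<Sum>x\<in>A. eval_at_1 (f x))"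
    using assms
    by (induction A rule: infinite_finite_induct)
      (simp_all add: no_pole_at_1_0 eval_at_1_0 no_pole_at_1_add eval_at_1_add)
  then show "no_pole_at_1 (sum f A)" "eval_at_1 (sum f A) = (\<Sum>x\<in>A. eval_at_1 (f x))"
    by simp_all
qed

section \<open>Polynomials with pole-free coefficients\<close>

definition no_pole_poly :: "ratfun poly \<Rightarrow> bool" where
  "no_pole_poly p \<longleftrightarrow> (\<forall>i. no_pole_at_1 (coeff p i))"

lemma no_pole_poly_0 [simp]: "no_pole_poly 0"
  by (simp add: no_pole_poly_def no_pole_at_1_0)

lemma no_pole_poly_pCons [simp]: "no_pole_poly (pCons a p) \<longleftrightarrow> no_pole_at_1 a \<and> no_pole_poly p"
  unfolding no_pole_poly_def by (auto simp: coeff_pCons split: nat.splits)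

lemma no_pole_poly_smult: "no_pole_at_1 c \<Longrightarrow> no_pole_poly p \<Longrightarrow> no_pole_poly (smult c p)"
  by (simp add: no_pole_poly_def no_pole_at_1_mult)

lemma no_pole_poly_add: "no_pole_poly p \<Longrightarrow> no_pole_poly q \<Longrightarrow> no_pole_poly (p + q)"
  by (simp add: no_pole_poly_def no_pole_at_1_add)

lemma no_pole_poly_mult: "no_pole_poly p \<Longrightarrow> no_pole_poly q \<Longrightarrow> no_pole_poly (p * q)"
  unfolding no_pole_poly_def
  by (blast intro: coeff_mult_semiring_closed[of "Collect no_pole_at_1", simplified]
      no_pole_at_1_0 no_pole_at_1_add no_pole_at_1_mult)

lemma no_pole_poly_pcompose: "no_pole_poly p \<Longrightarrow> no_pole_poly q \<Longrightarrow> no_pole_poly (pcompose p q)"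
  unfolding no_pole_poly_def
  by (blast intro: coeff_pcompose_semiring_closed[of "Collect no_pole_at_1", simplified]
      no_pole_at_1_0 no_pole_at_1_add no_pole_at_1_mult)

lemma no_pole_poly_sum: "(\<And>x. x \<in> A \<Longrightarrow> no_pole_poly (f x)) \<Longrightarrow> no_pole_poly (sum f A)"
  by (induction A rule: infinite_finite_induct) (auto simp: no_pole_poly_add)

lemma no_pole_poly_prod: "(\<And>x. x \<in> A \<Longrightarrow> no_pole_poly (f x)) \<Longrightarrow> no_pole_poly (prod f A)"
  by (induction A rule: infinite_finite_induct)
    (auto simp: no_pole_poly_mult one_pCons no_pole_at_1_1)

lemma eval_at_1_poly:
  assumes "no_pole_poly p" "no_pole_at_1 x"
  shows "eval_at_1 (poly p x) = poly (map_poly eval_at_1 p) (eval_at_1 x)"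
proof -
  have "no_pole_at_1 (poly p x) \<and> eval_at_1 (poly p x) = poly (map_poly eval_at_1 p) (eval_at_1 x)"
    using assms(1)
  proof (induction p)
    case 0
    show ?case
      by (simp add: no_pole_at_1_0 eval_at_1_0)
  next
    case (pCons a p)
    have "map_poly eval_at_1 (pCons a p) = pCons (eval_at_1 a) (map_poly eval_at_1 p)"
      by (simp add: map_poly_pCons eval_at_1_0)
    with pCons assms(2) show ?case
      by (simp add: no_pole_at_1_add eval_at_1_add no_pole_at_1_mult eval_at_1_mult)
  qed
  then show ?thesis
    by simp
qed

lemma map_poly_eval_at_1_sum:
  assumes "\<And>x. x \<in> A \<Longrightarrow> no_pole_poly (f x)"
  shows "map_poly eval_at_1 (sum f A) = (\<Sum>x\<in>A. map_poly eval_at_1 (f x))"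
  using assms
  by (intro poly_eqI) (simp add: coeff_map_poly coeff_sum eval_at_1_0 eval_at_1_sum no_pole_poly_def)

text \<open>The nodes must stay distinct at q = 1: the Lagrange basis divides by their differences.\<close>
lemma no_pole_poly_interpolation:
  assumes "finite I" "degree p < card I"
    and nodes: "\<And>i. i \<in> I \<Longrightarrow> no_pole_at_1 (x i)" "inj_on (\<lambda>i. eval_at_1 (x i)) I"
    and vals: "\<And>i. i \<in> I \<Longrightarrow> no_pole_at_1 (poly p (x i))"
  shows "no_pole_poly p"
proof -
  have "inj_on x I"
    using nodes(2) by (auto simp: inj_on_def)
  have factor: "no_pole_poly (smult (inverse (x i - x j)) [:- x j, 1:])"
    if "i \<in> I" "j \<in> I - {i}" for i j
  proof -
    have "eval_at_1 (x i - x j) \<noteq> 0"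
      using that nodes by (auto simp: eval_at_1_diff dest: inj_onD)
    then show ?thesis
      using that nodes(1) by (intro no_pole_poly_smult)
        (simp_all add: no_pole_at_1_inverse no_pole_at_1_diff no_pole_at_1_uminus no_pole_at_1_1)
  qed
  have "no_pole_poly (\<Sum>i\<in>I. smult (poly p (x i)) (lagrange_basis x I i))"
    unfolding lagrange_basis_def
    by (intro no_pole_poly_sum no_pole_poly_smult no_pole_poly_prod vals factor)
  then show ?thesis
    using lagrange_interpolation[OF assms(1) \<open>inj_on x I\<close> assms(2)] by simp
qed

section \<open>q-integers\<close>

lemma qvar_power_Fract: "qvar ^ n = Fract ([:0, 1:] ^ n) 1"
  by (induction n) (simp_all add: qvar_def One_fract_def)

lemma
  shows no_pole_at_1_qvar_power: "no_pole_at_1 (qvar ^ n)"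
    and eval_at_1_qvar_power: "eval_at_1 (qvar ^ n) = 1"
  by (simp_all add: qvar_power_Fract no_pole_at_1_poly_const eval_at_1_poly_const poly_power)

lemma qvar_ne_0: "qvar \<noteq> 0"
  by (simp add: qvar_def Zero_fract_def eq_fract)

lemma qvar_ne_1: "qvar \<noteq> 1"
  unfolding qvar_def One_fract_def
  by (auto simp: eq_fract dest: arg_cong[where f = "\<lambda>p. coeff p 0"])

lemma qvar_power_inject: "qvar ^ b = qvar ^ c \<longleftrightarrow> b = c"
  unfolding qvar_power_Fract
  by (auto simp: eq_fract degree_power_eq dest: arg_cong[where f = degree])

lemma qint_eq_sum: "qint n = (\<Sum>i<n. qvar ^ i)"
  unfolding qint_def using geometric_sum[OF qvar_ne_1] by simp

lemma
  shows no_pole_at_1_qint: "no_pole_at_1 (qint n)"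
    and eval_at_1_qint: "eval_at_1 (qint n) = of_nat n"
  unfolding qint_eq_sum
  by (simp_all add: no_pole_at_1_sum eval_at_1_sum no_pole_at_1_qvar_power eval_at_1_qvar_power)

lemma inj_qint: "inj qint"
  by (rule injI) (metis eval_at_1_qint of_nat_eq_iff)

lemma qint_add: "qint (j + m) = qint j + qvar ^ j * qint m"
proof -
  have "qvar ^ j * qvar ^ m - 1 = (qvar ^ j - 1) + qvar ^ j * (qvar ^ m - 1)"
    by algebra
  then show ?thesis
    unfolding qint_def power_add by (metis add_divide_distrib times_divide_eq_right)
qed

lemma qint_Suc: "qint (Suc n) = 1 + qvar * qint n"
  using qint_add[of 1 n] by (simp add: qint_eq_sum)

lemma qvar_power_eq_qint: "qvar ^ n = 1 + (qvar - 1) * qint n"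
  unfolding qint_eq_sum power_diff_1_eq[symmetric] by simp

section \<open>The polynomials E_a\<close>

lemma finite_length_sum_list: "finite {m :: nat list. length m = l \<and> sum_list m = n}"
proof (rule finite_subset)
  show "{m. length m = l \<and> sum_list m = n} \<subseteq> {m. set m \<subseteq> {..n} \<and> length m = l}"
    by (auto simp: member_le_sum_list)
qed (rule finite_lists_length_eq[OF finite_atMost])

lemma length_sum_list_Suc_eq:
  "{m :: nat list. length m = Suc l \<and> sum_list m = n}
     = (\<lambda>(j, m). j # m) ` (SIGMA j:{..n}. {m. length m = l \<and> sum_list m = n - j})"
  by (auto simp: length_Suc_conv image_iff)

lemma Esum_Nil: "Esum [] n = (if n = 0 then 1 else 0)"
proof -
  have "{m :: nat list. length m = 0 \<and> sum_list m = n} = (if n = 0 then {[]} else {})"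
    by auto
  then show ?thesis
    by (simp add: Esum_def)
qed

lemma Esum_Cons: "Esum (b # a) n = (\<Sum>j\<le>n. qvar ^ (b * j) * Esum a (n - j))"
proof -
  define S where "S j = {m :: nat list. length m = length a \<and> sum_list m = j}" for j
  define w where "w m = (\<Sum>i<length a. a ! i * m ! i)" for m
  have weight: "(\<Sum>i<Suc (length a). (b # a) ! i * (j # m) ! i) = b * j + w m" for j m
    unfolding w_def by (simp only: sum.lessThan_Suc_shift) simp
  have "inj_on (\<lambda>(j, m). j # m) (SIGMA j:{..n}. S (n - j))"
    by (auto simp: inj_on_def)
  then have "Esum (b # a) n = (\<Sum>x\<in>(SIGMA j:{..n}. S (n - j)). qvar ^ (b * fst x) * qvar ^ w (snd x))"
    unfolding Esum_def length_Cons length_sum_list_Suc_eq S_def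
    by (subst sum.reindex) (simp_all only: comp_def case_prod_beta weight power_add)
  also have "\<dots> = (\<Sum>j\<le>n. \<Sum>m\<in>S (n - j). qvar ^ (b * j) * qvar ^ w m)"
    by (subst sum.Sigma) (auto simp: S_def finite_length_sum_list case_prod_beta)
  also have "\<dots> = (\<Sum>j\<le>n. qvar ^ (b * j) * (\<Sum>m\<in>S (n - j). qvar ^ w m))"
    by (simp add: sum_distrib_left)
  also have "\<dots> = (\<Sum>j\<le>n. qvar ^ (b * j) * Esum a (n - j))"
    by (simp add: Esum_def S_def w_def)
  finally show ?thesis .
qed

lemma Esum_0 [simp]: "Esum a 0 = 1"
  by (induction a) (simp_all add: Esum_Nil Esum_Cons)

lemma Esum_Cons_Suc: "Esum (b # a) (Suc n) = Esum a (Suc n) + qvar ^ b * Esum (b # a) n"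
  unfolding Esum_Cons sum.atMost_Suc_shift
  by (simp add: sum_distrib_left power_add mult.assoc)

lemma Esum_singleton: "Esum [b] n = qvar ^ (b * n)"
  by (induction n) (simp_all add: Esum_Cons_Suc Esum_Nil power_add)

lemma Esum_Cons_Cons:
  "Esum (b # c # a) n
     = (\<Sum>(j, i)\<in>{(j, i). j + i \<le> n}. qvar ^ (b * j) * qvar ^ (c * i) * Esum a (n - j - i))"
proof -
  have "{(j, i). j + i \<le> n} = (SIGMA j:{..n}. {..n - j})"
    by auto
  then show ?thesis
    by (simp add: Esum_Cons sum.Sigma[symmetric] sum_distrib_left diff_diff_add mult.assoc)
qed

lemma Esum_swap: "Esum (b # c # a) n = Esum (c # b # a) n"
  unfolding Esum_Cons_Cons
  by (rule sum.reindex_bij_witness[where i = prod.swap and j = prod.swap])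
    (auto simp: mult_ac add.commute diff_diff_add)

lemma Esum_divided_difference:
  "(qvar ^ b - qvar ^ c) * Esum (b # c # a) n = Esum (b # a) (Suc n) - Esum (c # a) (Suc n)"
proof (cases n)
  case 0
  then show ?thesis
    by (simp add: Esum_Cons_Suc algebra_simps)
next
  case (Suc m)
  define G where "G = Esum (b # c # a) m"
  have G_b: "Esum (b # c # a) n = Esum (c # a) n + qvar ^ b * G"
    unfolding G_def Suc by (rule Esum_Cons_Suc)
  have G_c: "Esum (b # c # a) n = Esum (b # a) n + qvar ^ c * G"
    unfolding G_def Suc Esum_swap[of b c a] by (rule Esum_Cons_Suc)
  have "(qvar ^ b - qvar ^ c) * Esum (b # c # a) n
      = qvar ^ b * Esum (b # c # a) n - qvar ^ c * Esum (b # c # a) n"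
    by (simp add: left_diff_distrib)
  also have "\<dots> = qvar ^ b * (Esum (b # a) n + qvar ^ c * G)
      - qvar ^ c * (Esum (c # a) n + qvar ^ b * G)"
    by (subst (2) G_b, subst G_c) (rule refl)
  also have "\<dots> = qvar ^ b * Esum (b # a) n - qvar ^ c * Esum (c # a) n"
    by (simp add: algebra_simps)
  finally show ?thesis
    by (simp add: Esum_Cons_Suc)
qed

lemma
  shows no_pole_at_1_Esum: "no_pole_at_1 (Esum a n)"
    and eval_at_1_Esum: "eval_at_1 (Esum a n) = of_nat ((n + length a - 1) choose n)"
proof -
  show "no_pole_at_1 (Esum a n)"
    unfolding Esum_def by (intro no_pole_at_1_sum no_pole_at_1_qvar_power)
  have "eval_at_1 (Esum a n) = of_nat (card {m :: nat list. length m = length a \<and> sum_list m = n})"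
    unfolding Esum_def by (simp add: eval_at_1_sum no_pole_at_1_qvar_power eval_at_1_qvar_power)
  then show "eval_at_1 (Esum a n) = of_nat ((n + length a - 1) choose n)"
    by (simp add: card_length_sum_list)
qed

lemma poly_qint_Esum_singleton: "poly ([:1, qvar - 1:] ^ b) (qint n) = Esum [b] n"
proof -
  have "poly [:1, qvar - 1:] (qint n) = qvar ^ n"
    by (simp add: qvar_power_eq_qint mult.commute)
  then show ?thesis
    unfolding poly_power Esum_singleton by (metis power_mult mult.commute)
qed

lemma poly_qint_Esum_Cons_Cons:
  assumes "b \<noteq> c"
    and "\<And>n. poly p1 (qint n) = Esum (b # a) n" "\<And>n. poly p2 (qint n) = Esum (c # a) n"
  shows "poly (smult (inverse (qvar ^ b - qvar ^ c)) (pcompose (p1 - p2) [:1, qvar:])) (qint n)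
    = Esum (b # c # a) n"
proof -
  have "poly [:1, qvar:] (qint n) = qint (Suc n)"
    by (simp add: qint_Suc mult.commute)
  then have "poly (smult (inverse (qvar ^ b - qvar ^ c)) (pcompose (p1 - p2) [:1, qvar:])) (qint n)
      = inverse (qvar ^ b - qvar ^ c) * (Esum (b # a) (Suc n) - Esum (c # a) (Suc n))"
    by (simp add: poly_pcompose assms(2,3) del: poly_pCons)
  also have "\<dots> = Esum (b # c # a) n"
    using assms(1) by (simp add: Esum_divided_difference[symmetric] qvar_power_inject)
  finally show ?thesis .
qed

lemma Esum_polynomial:
  assumes "distinct a" "a \<noteq> []"
  shows "\<exists>p. degree p \<le> sum_list a \<and> (\<forall>n. poly p (qint n) = Esum a n)"
  using assms
proof (induction "length a" arbitrary: a rule: less_induct)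
  case less
  then obtain b a' where a: "a = b # a'"
    by (cases a) auto
  show ?case
  proof (cases a')
    case Nil
    have "degree ([:1, qvar - 1:] ^ b) \<le> b"
      using degree_power_le[of "[:1, qvar - 1:]" b] by (simp add: qvar_ne_1)
    with a Nil show ?thesis
      using poly_qint_Esum_singleton by auto
  next
    case (Cons c a'')
    obtain p1 where p1: "degree p1 \<le> sum_list (b # a'')" "\<And>n. poly p1 (qint n) = Esum (b # a'') n"
      using less.hyps[of "b # a''"] less.prems a Cons by auto
    obtain p2 where p2: "degree p2 \<le> sum_list (c # a'')" "\<And>n. poly p2 (qint n) = Esum (c # a'') n"
      using less.hyps[of "c # a''"] less.prems a Cons by auto
    define p where "p = smult (inverse (qvar ^ b - qvar ^ c)) (pcompose (p1 - p2) [:1, qvar:])"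
    have "degree p \<le> degree (pcompose (p1 - p2) [:1, qvar:])"
      unfolding p_def by (rule degree_smult_le)
    also have "\<dots> = degree (p1 - p2)"
      by (simp add: degree_pcompose qvar_ne_0)
    also have "\<dots> \<le> sum_list a"
      using degree_diff_le_max[of p1 p2] p1(1) p2(1) a Cons by simp
    finally have "degree p \<le> sum_list a" .
    moreover have "poly p (qint n) = Esum a n" for n
      unfolding p_def a Cons using less.prems a Cons by (intro poly_qint_Esum_Cons_Cons p1 p2) auto
    ultimately show ?thesis
      by blast
  qed
qed

lemma
  assumes "distinct a" "a \<noteq> []"
  shows poly_Epoly_qint: "poly (Epoly a) (qint n) = Esum a n"
    and degree_Epoly: "degree (Epoly a) \<le> sum_list a"
proof -
  obtain p where p: "degree p \<le> sum_list a" "\<And>n. poly p (qint n) = Esum a n"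
    using Esum_polynomial[OF assms] by blast
  have "Epoly a = p"
    unfolding Epoly_def
  proof (rule the_equality)
    fix p'
    assume "\<forall>n. poly p' (qint n) = Esum a n"
    then show "p' = p"
      using p(2) by (intro poly_eqI_infinite[of "range qint"])
        (auto simp: range_inj_infinite inj_qint)
  qed (use p(2) in simp)
  with p show "poly (Epoly a) (qint n) = Esum a n" "degree (Epoly a) \<le> sum_list a"
    by simp_all
qed

lemma no_pole_poly_Epoly:
  assumes "distinct a" "a \<noteq> []"
  shows "no_pole_poly (Epoly a)"
proof (rule no_pole_poly_interpolation[of "{..sum_list a}" _ qint])
  show "degree (Epoly a) < card {..sum_list a}"
    using degree_Epoly[OF assms] by simp
  show "inj_on (\<lambda>i. eval_at_1 (qint i)) {..sum_list a}"
    by (simp add: eval_at_1_qint inj_on_def)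
qed (simp_all add: no_pole_at_1_qint poly_Epoly_qint[OF assms] no_pole_at_1_Esum)

section \<open>Counting multichains\<close>

lemma sorted_wrt_less_imp_distinct: "sorted_wrt (<) (xs :: 'a::order list) \<Longrightarrow> distinct xs"
  by (induction xs) auto

lemma finite_strict_chains: "finite P \<Longrightarrow> finite (strict_chains P)"
proof (rule finite_subset)
  show "strict_chains P \<subseteq> {xs. set xs \<subseteq> P \<and> distinct xs}"
    by (auto simp: strict_chains_def sorted_wrt_less_imp_distinct)
qed (rule finite_subset_distinct)

fun expand_chain :: "'a list \<Rightarrow> nat list \<Rightarrow> 'a list" where
  "expand_chain (c # cs) (k # ks) = replicate (Suc k) c @ expand_chain cs ks"
| "expand_chain _ _ = []"

lemma length_expand_chain:
  "length ks = length cs \<Longrightarrow> length (expand_chain cs ks) = sum_list ks + length cs"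
  by (induction cs ks rule: expand_chain.induct) auto

lemma set_expand_chain: "length ks = length cs \<Longrightarrow> set (expand_chain cs ks) = set cs"
  by (induction cs ks rule: expand_chain.induct) auto

lemma sorted_expand_chain:
  fixes cs :: "'a::order list"
  shows "sorted_wrt (<) cs \<Longrightarrow> length ks = length cs \<Longrightarrow> sorted_wrt (\<le>) (expand_chain cs ks)"
proof (induction cs ks rule: expand_chain.induct)
  case (1 c cs k ks)
  have "sorted_wrt (\<le>) (replicate n c)" for n
    by (induction n) auto
  moreover have "\<forall>y\<in>set (expand_chain cs ks). c \<le> y"
    using 1 by (simp add: set_expand_chain less_imp_le)
  ultimately show ?case
    using 1 by (auto simp: sorted_wrt_append)
qed auto

text \<open>The multiplicity k of the first element c is recovered as the number of copies of c,
  since c does not occur in the remaining blocks.\<close>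
lemma expand_chain_inject:
  fixes cs cs' :: "'a::order list"
  assumes "sorted_wrt (<) cs" "sorted_wrt (<) cs'" "length ks = length cs" "length ks' = length cs'"
    and "expand_chain cs ks = expand_chain cs' ks'"
  shows "cs = cs' \<and> ks = ks'"
  using assms
proof (induction cs arbitrary: ks cs' ks')
  case Nil
  then show ?case
    by (cases cs'; cases ks') auto
next
  case (Cons c cs)
  obtain k ks0 where ks: "ks = k # ks0"
    using Cons.prems(3) by (cases ks) auto
  obtain c' cs2 k' ks2 where cs': "cs' = c' # cs2" "ks' = k' # ks2"
    using Cons.prems(3-5) ks by (cases cs'; cases ks') auto
  have eq: "replicate (Suc k) c @ expand_chain cs ks0 = replicate (Suc k') c' @ expand_chain cs2 ks2"
    using Cons.prems(5) by (simp only: ks cs' expand_chain.simps)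
  then have "c' = c"
    by simp
  have "c \<notin> set (expand_chain cs ks0)" "c \<notin> set (expand_chain cs2 ks2)"
    using Cons.prems(1-4) ks cs' \<open>c' = c\<close> by (auto simp: set_expand_chain)
  then have "filter ((=) c) (expand_chain cs ks0) = []" "filter ((=) c) (expand_chain cs2 ks2) = []"
    by (auto simp: filter_empty_conv)
  with arg_cong[OF eq, of "filter ((=) c)"] \<open>c' = c\<close> have "k' = k"
    by simp
  with eq \<open>c' = c\<close> have "expand_chain cs ks0 = expand_chain cs2 ks2"
    by simp
  with Cons.IH[of cs2 ks0 ks2] Cons.prems ks cs' \<open>c' = c\<close> \<open>k' = k\<close> show ?case
    by simp
qed

lemma expand_chain_surj:
  fixes es :: "'a::order list"
  assumes "sorted_wrt (\<le>) es"
  shows "\<exists>cs ks. sorted_wrt (<) cs \<and> length ks = length cs \<and> expand_chain cs ks = es"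
  using assms
proof (induction es)
  case Nil
  show ?case
    by (rule exI[of _ "[]"], rule exI[of _ "[]"]) simp
next
  case (Cons x es)
  then obtain cs ks where cs: "sorted_wrt (<) cs" "length ks = length cs" "expand_chain cs ks = es"
    by auto
  show ?case
  proof (cases cs)
    case Nil
    with cs show ?thesis
      by (intro exI[of _ "[x]"] exI[of _ "[0]"]) simp
  next
    case (Cons c cs')
    then obtain k ks' where ks: "ks = k # ks'"
      using cs(2) by (cases ks) auto
    have "c \<in> set es"
      using cs Cons ks by auto
    with Cons.prems have "x \<le> c"
      by simp
    show ?thesis
    proof (cases "x = c")
      case True
      with cs Cons ks show ?thesis
        by (intro exI[of _ cs] exI[of _ "Suc k # ks'"]) simp
    next
      case False
      with \<open>x \<le> c\<close> cs(1) Cons have "\<forall>y\<in>set cs. x < y"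
        by (auto intro: less_le_trans less_imp_le)
      with cs show ?thesis
        by (intro exI[of _ "x # cs"] exI[of _ "0 # ks"]) simp
    qed
  qed
qed

lemma card_compositions:
  assumes "k \<ge> 1" "L \<ge> 1"
  shows "card {ks. length ks = k \<and> sum_list ks + k = L} = (L - 1) choose (k - 1)"
proof (cases "k \<le> L")
  case True
  then have "{ks. length ks = k \<and> sum_list ks + k = L} = {ks. length ks = k \<and> sum_list ks = L - k}"
    by auto
  moreover have "(L - 1) choose (k - 1) = (L - k + k - 1) choose (L - k)"
    using True assms by (subst binomial_symmetric) (simp_all add: Suc_diff_le)
  ultimately show ?thesis
    by (simp add: card_length_sum_list)
next
  case False
  then have "{ks. length ks = k \<and> sum_list ks + k = L} = {}"
    by auto
  with False assms show ?thesis
    by simp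
qed

lemma bij_betw_expand_chain:
  fixes P :: "'a::order set"
  assumes "L \<ge> 1"
  shows "bij_betw (\<lambda>(cs, ks). expand_chain cs ks)
           (SIGMA cs:strict_chains P. {ks. length ks = length cs \<and> sum_list ks + length cs = L})
           (multichains P L)"
    (is "bij_betw ?f ?D _")
proof (rule bij_betw_imageI)
  show "inj_on ?f ?D"
    by (intro inj_onI) (auto simp: strict_chains_def dest: expand_chain_inject)
  show "?f ` ?D = multichains P L"
  proof (intro equalityI subsetI)
    fix es
    assume es: "es \<in> multichains P L"
    then obtain cs ks where cs: "sorted_wrt (<) cs" "length ks = length cs" "expand_chain cs ks = es"
      using expand_chain_surj unfolding multichains_def by blast
    moreover have "cs \<noteq> []"
      using cs es assms by (auto simp: multichains_def)
    ultimately show "es \<in> ?f ` ?D"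
      using es by (auto simp: multichains_def strict_chains_def set_expand_chain length_expand_chain
          intro!: image_eqI[of _ _ "(cs, ks)"])
  qed (auto simp: multichains_def strict_chains_def set_expand_chain length_expand_chain
      sorted_expand_chain)
qed

lemma card_multichains:
  fixes P :: "'a::order set"
  assumes "finite P" "L \<ge> 1"
  shows "card (multichains P L) = (\<Sum>cs\<in>strict_chains P. (L - 1) choose (length cs - 1))"
proof -
  define C where "C cs = {ks. length ks = length cs \<and> sum_list ks + length cs = L}" for cs :: "'a list"
  have "card (multichains P L) = card (SIGMA cs:strict_chains P. C cs)"
    using bij_betw_expand_chain[OF assms(2), of P] unfolding C_def by (simp add: bij_betw_same_card)
  also have "\<dots> = (\<Sum>cs\<in>strict_chains P. card (C cs))"
  proof (rule card_SigmaI)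
    show "finite (strict_chains P)"
      using assms(1) by (rule finite_strict_chains)
    have "C cs \<subseteq> {ks. length ks = length cs \<and> sum_list ks = L - length cs}" for cs
      by (auto simp: C_def)
    then show "\<forall>cs\<in>strict_chains P. finite (C cs)"
      using finite_length_sum_list finite_subset by blast
  qed
  also have "\<dots> = (\<Sum>cs\<in>strict_chains P. (L - 1) choose (length cs - 1))"
  proof (rule sum.cong[OF refl])
    fix cs
    assume "cs \<in> strict_chains P"
    then have "length cs \<ge> 1"
      by (cases cs) (auto simp: strict_chains_def)
    then show "card (C cs) = (L - 1) choose (length cs - 1)"
      unfolding C_def using assms(2) by (rule card_compositions)
  qed
  finally show ?thesis .
qed

section \<open>The q-Zeta polynomial at q = 1\<close>

lemma height_function_less:
  fixes P :: "'a::order set"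
  assumes "finite P" "height_function P h" "x \<in> P" "y \<in> P" "x < y"
  shows "h x < h y"
  using assms(3-5)
proof (induction "card {z\<in>P. x < z \<and> z < y}" arbitrary: x y rule: less_induct)
  case less
  show ?case
  proof (cases "\<exists>z\<in>P. x < z \<and> z < y")
    case False
    with less.prems have "covers P x y"
      by (auto simp: covers_def)
    with assms(2) show ?thesis
      by (auto simp: height_function_def)
  next
    case True
    then obtain z where z: "z \<in> P" "x < z" "z < y"
      by blast
    have fin: "finite {w\<in>P. x < w \<and> w < y}"
      using assms(1) by simp
    have "{w\<in>P. x < w \<and> w < z} \<subset> {w\<in>P. x < w \<and> w < y}"
      and "{w\<in>P. z < w \<and> w < y} \<subset> {w\<in>P. x < w \<and> w < y}"
      using z by (auto intro: less_trans)
    with less.hyps less.prems z fin have "h x < h z" "h z < h y"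
      by (blast dest: psubset_card_mono)+
    then show ?thesis
      by simp
  qed
qed

lemma distinct_heights_strict_chain:
  assumes "finite P" "height_function P h" "cs \<in> strict_chains P"
  shows "distinct (map h cs)"
proof -
  have "sorted_wrt (<) cs" "set cs \<subseteq> P"
    using assms(3) by (auto simp: strict_chains_def)
  then have "sorted_wrt (<) (map h cs)"
    unfolding sorted_wrt_map
    using sorted_wrt_mono_rel[of cs "(<)" "\<lambda>x y. h x < h y"] height_function_less[OF assms(1,2)]
    by blast
  then show ?thesis
    by (simp add: strict_sorted_iff)
qed

definition chain_term :: "nat list \<Rightarrow> ratfun poly" where
  "chain_term a = smult (qvar ^ sum_list a)
     (pcompose (Epoly a) [: - qint (length a + 1) / qvar ^ (length a + 1), 1 / qvar ^ (length a + 1) :])"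

lemma qZeta_eq_sum_chain_term: "qZeta P h = (\<Sum>cs\<in>strict_chains P. chain_term (map h cs))"
  unfolding qZeta_def chain_term_def length_map ..

lemma poly_shift_qint:
  assumes "k \<le> n"
  shows "poly [: - qint k / qvar ^ k, 1 / qvar ^ k :] (qint n) = qint (n - k)"
proof -
  obtain m where n: "n = k + m"
    using assms le_Suc_ex by blast
  show ?thesis
    unfolding n qint_add by (simp add: field_simps qvar_ne_0)
qed

lemma no_pole_poly_chain_term:
  assumes "distinct a" "a \<noteq> []"
  shows "no_pole_poly (chain_term a)"
proof -
  have "no_pole_poly [: - qint k / qvar ^ k, 1 / qvar ^ k :]" for k
    by (simp add: no_pole_at_1_divide no_pole_at_1_qvar_power eval_at_1_qvar_power
        no_pole_at_1_uminus no_pole_at_1_qint no_pole_at_1_1)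
  then show ?thesis
    unfolding chain_term_def
    by (intro no_pole_poly_smult no_pole_poly_pcompose no_pole_poly_Epoly assms
        no_pole_at_1_qvar_power)
qed

lemma eval_at_1_chain_term:
  assumes "distinct a" "a \<noteq> []" "length a + 1 \<le> n"
  shows "eval_at_1 (poly (chain_term a) (qint n)) = of_nat ((n - 2) choose (length a - 1))"
proof -
  have "poly (chain_term a) (qint n) = qvar ^ sum_list a * Esum a (n - (length a + 1))"
    unfolding chain_term_def poly_smult poly_pcompose
    by (simp only: poly_shift_qint[OF assms(3)] poly_Epoly_qint[OF assms(1,2)])
  then have "eval_at_1 (poly (chain_term a) (qint n))
      = of_nat ((n - (length a + 1) + length a - 1) choose (n - (length a + 1)))"
    by (simp add: eval_at_1_mult no_pole_at_1_qvar_power no_pole_at_1_Esum eval_at_1_qvar_power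
        eval_at_1_Esum)
  also have "(n - (length a + 1) + length a - 1) choose (n - (length a + 1))
      = (n - 2) choose (length a - 1)"
    using assms(2,3)
    by (subst binomial_symmetric[of "length a - 1"]) (auto simp: Suc_le_eq numeral_2_eq_2)
  finally show ?thesis .
qed

lemma map_poly_eval_at_1_chain_term:
  assumes "distinct a" "a \<noteq> []"
  shows "map_poly eval_at_1 (chain_term a) = pcompose (gbinomial_poly (length a - 1)) [:-2, 1:]"
proof (rule poly_eqI_infinite[OF infinite_of_nat_atLeast[of "length a + 1"]])
  fix x :: rat
  assume "x \<in> of_nat ` {length a + 1..}"
  then obtain n where n: "x = of_nat n" "length a + 1 \<le> n"
    by blast
  have "poly (map_poly eval_at_1 (chain_term a)) x = eval_at_1 (poly (chain_term a) (qint n))"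
    using n(1) no_pole_poly_chain_term[OF assms]
    by (simp add: eval_at_1_poly no_pole_at_1_qint eval_at_1_qint)
  also have "\<dots> = of_nat (n - 2) gchoose (length a - 1)"
    using eval_at_1_chain_term[OF assms n(2)] by (simp add: binomial_gbinomial)
  also have "of_nat (n - 2) = x - 2"
    using assms(2) n by (cases a) (simp_all add: of_nat_diff)
  also have "(x - 2) gchoose (length a - 1)
      = poly (pcompose (gbinomial_poly (length a - 1)) [:-2, 1:]) x"
    by (simp add: poly_pcompose poly_gbinomial_poly)
  finally show "poly (map_poly eval_at_1 (chain_term a)) x
      = poly (pcompose (gbinomial_poly (length a - 1)) [:-2, 1:]) x" .
qed

lemma Zeta_eq_sum_gbinomial_poly:
  fixes P :: "'a::order set"
  assumes "finite P"
  shows "Zeta P = (\<Sum>cs\<in>strict_chains P. pcompose (gbinomial_poly (length cs - 1)) [:-2, 1:])"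
    (is "_ = ?W")
proof -
  have W: "poly ?W (of_nat n) = of_nat (card (multichains P (n - 1)))" if "n \<ge> 2" for n
  proof -
    have "poly ?W (of_nat n) = (\<Sum>cs\<in>strict_chains P. of_nat (n - 2) gchoose (length cs - 1))"
      using that by (simp add: poly_sum poly_pcompose poly_gbinomial_poly of_nat_diff)
    also have "\<dots> = of_nat (\<Sum>cs\<in>strict_chains P. (n - 2) choose (length cs - 1))"
      by (simp add: binomial_gbinomial)
    also have "(\<Sum>cs\<in>strict_chains P. (n - 2) choose (length cs - 1)) = card (multichains P (n - 1))"
      using card_multichains[OF assms, of "n - 1"] that by (simp add: numeral_2_eq_2)
    finally show ?thesis .
  qed
  show ?thesis
    unfolding Zeta_def
  proof (rule the_equality)
    fix p :: "rat poly"
    assume p: "\<forall>n. n \<ge> 2 \<longrightarrow> poly p (of_nat n) = of_nat (card (multichains P (n - 1)))"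
    show "p = ?W"
      by (rule poly_eqI_infinite[OF infinite_of_nat_atLeast[of 2]]) (use p W in auto)
  qed (use W in simp)
qed

theorem mainTheorem19:
  fixes P :: "'a::order set" and h :: "'a \<Rightarrow> nat"
  assumes "finite P" and "height_function P h"
  shows "(\<forall>i. no_pole_at_1 (coeff (qZeta P h) i))
       \<and> map_poly eval_at_1 (qZeta P h) = Zeta P"
proof -
  have heights: "distinct (map h cs)" "map h cs \<noteq> []" if "cs \<in> strict_chains P" for cs
    using distinct_heights_strict_chain[OF assms that] that by (auto simp: strict_chains_def)
  have "no_pole_poly (qZeta P h)"
    unfolding qZeta_eq_sum_chain_term by (intro no_pole_poly_sum no_pole_poly_chain_term heights)
  moreover have "map_poly eval_at_1 (qZeta P h) = Zeta P"
  proof -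
    have "map_poly eval_at_1 (qZeta P h)
        = (\<Sum>cs\<in>strict_chains P. map_poly eval_at_1 (chain_term (map h cs)))"
      unfolding qZeta_eq_sum_chain_term
      by (intro map_poly_eval_at_1_sum no_pole_poly_chain_term heights)
    also have "\<dots> = (\<Sum>cs\<in>strict_chains P. pcompose (gbinomial_poly (length cs - 1)) [:-2, 1:])"
      using map_poly_eval_at_1_chain_term[OF heights] by (intro sum.cong refl) simp
    also have "\<dots> = Zeta P"
      using Zeta_eq_sum_gbinomial_poly[OF assms(1)] by simp
    finally show ?thesis .
  qed
  ultimately show ?thesis
    by (simp add: no_pole_poly_def)
qed

end
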